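(* Let $n\geq 0$ be an integer, $r,s\in\mathbf{N}$, $k\in\mathbf{Z}$ and $\lambda\in\mathbf{C}$ with $\lambda\neq 1$. Then \[\tilde{A}_{n}^{(r,k)}(x)=\sum_{m=0}^{n}\left\{\sum_{l=0}^{n-m}\sum_{a=0}^{l}\frac{\binom{n}{l}\binom{s}{a}\binom{l}{a}a!}{(1-\lambda)^{a}}S_{1}(n-l,m)\tilde{A}_{l-a}^{(r,k)}\right\}H_{m}^{(s)}(x\mid\lambda).\]
   Context: For $k\in\mathbf{Z}$, $Lif_{k}(x)=\sum_{m=0}^{\infty}\frac{x^{m}}{m!(m+1)^{k}}$. For integers $r\geq 0$, $k\in\mathbf{Z}$, the polynomials $\tilde{A}_{n}^{(r,k)}(x)$ are defined by \[\left(\frac{t}{(1+t)\log(1+t)}\right)^{r}Lif_{k}\left(-\log(1+t)\right)(1+t)^{x}=\sum_{n=0}^{\infty}\tilde{A}_{n}^{(r,k)}(x)\frac{t^{n}}{n!},\] and $\tilde{A}_{n}^{(r,k)}=\tilde{A}_{n}^{(r,k)}(0)$. For $\lambda\neq 1$, the Frobenius–Euler polynomials of order $s$ are defined by $\left(\frac{1-\lambda}{e^{t}-\lambda}\right)^{s}e^{xt}=\sum_{n=0}^{\infty}H_{n}^{(s)}(x\mid\lambda)\frac{t^{n}}{n!}$. $S_{1}(n,m)$ denotes the signed Stirling numbers of the first kind, defined by $x(x-1)\cdots(x-n+1)=\sum_{m=0}^{n}S_{1}(n,m)x^{m}$. *)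

theory Defs
  imports "HOL-Computational_Algebra.Computational_Algebra"
begin

definition Lif_fps :: "int \<Rightarrow> complex fps" where
  "Lif_fps k = Abs_fps (\<lambda>m. 1 / (of_nat (fact m) * (of_nat (m + 1)) powi k))"

abbreviation log1p_fps :: "complex fps" where
  "log1p_fps \<equiv> fps_ln 1"

(* generating function of tilde A_n^{(r,k)}(x):
   (t/((1+t) log(1+t)))^r * Lif_k(-log(1+t)) * (1+t)^x;
   t/log(1+t) = inverse (log(1+t)/t), and log(1+t)/t = fps_shift 1 (log(1+t)) *)
definition Atilde_gf :: "nat \<Rightarrow> int \<Rightarrow> complex \<Rightarrow> complex fps" where
  "Atilde_gf r k x =
     (inverse ((1 + fps_X) * fps_shift 1 log1p_fps)) ^ r
     * (Lif_fps k oo (- log1p_fps))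
     * fps_binomial x"

definition Atilde :: "nat \<Rightarrow> nat \<Rightarrow> int \<Rightarrow> complex \<Rightarrow> complex" where
  "Atilde n r k x = of_nat (fact n) * fps_nth (Atilde_gf r k x) n"

definition FE_gf :: "nat \<Rightarrow> complex \<Rightarrow> complex \<Rightarrow> complex fps" where
  "FE_gf s lam x =
     (fps_const (1 - lam) * inverse (fps_exp 1 - fps_const lam)) ^ s * fps_exp x"

definition FrobEuler :: "nat \<Rightarrow> nat \<Rightarrow> complex \<Rightarrow> complex \<Rightarrow> complex" where
  "FrobEuler n s lam x = of_nat (fact n) * fps_nth (FE_gf s lam x) n"

definition S1 :: "nat \<Rightarrow> nat \<Rightarrow> int" where
  "S1 n m = coeff (\<Prod>i<n. [:- of_nat i, 1:]) m"

end

theory Submission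
  imports Defs
begin

text \<open>
  Put u = log(1+t). Then e^u = 1+t, so e^(xu) = (1+t)^x and (1-\<lambda>)/(e^u-\<lambda>) = 1/(1 + t/(1-\<lambda>)).
  Hence the generating function of the polynomials Atilde factors as
  (1 + t/(1-\<lambda>))^s * (\<Sum>l. Atilde_l(0) t^l/l!) * (\<Sum>m. H_m(x|\<lambda>) u^m/m!), and u^m/m! is the
  exponential generating function of the Stirling numbers S1(j,m) in j. Comparing coefficients of
  t^n/n! and reordering the resulting triangular sum gives the identity.
\<close>

lemma fps_binomial_eq_exp_compose_ln:
  "fps_binomial (c::'a::field_char_0) = fps_exp c oo fps_ln 1"
proof -
  let ?f = "fps_exp c oo fps_ln 1"
  have "fps_deriv ?f = (fps_const c * fps_exp c oo fps_ln 1) * inverse (1 + fps_X)"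
    by (simp add: fps_compose_deriv fps_ln_deriv)
  also have "\<dots> = fps_const c * ?f / (1 + fps_X)"
    by (simp add: fps_compose_mult_distrib fps_divide_unit)
  finally show ?thesis
    using fps_binomial_ODE_unique'[of ?f c] by simp
qed

lemma fps_one_plus_const_X_power_nth:
  "((1 + fps_const (c::'a::field_char_0) * fps_X) ^ s) $ a = of_nat (s choose a) * c ^ a"
proof -
  have "(1 + fps_const c * fps_X) ^ s = fps_binomial (of_nat s) oo (fps_const c * fps_X)"
    by (simp add: fps_binomial_of_nat fps_compose_power[symmetric] fps_compose_add_distrib)
  then show ?thesis
    by (simp add: binomial_gbinomial)
qed

lemma fact_mult_fps_mult_nth:
  "fact n * (f * g) $ n =
     (\<Sum>l = 0..n. of_nat (n choose l) * (fact l * f $ l) * (fact (n - l) * g $ (n - l)))"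
  for f g :: "'a::{comm_semiring_1,semiring_char_0} fps"
  unfolding fps_mult_nth sum_distrib_left
proof (rule sum.cong[OF refl])
  fix l assume "l \<in> {0..n}"
  then have "(fact n :: 'a) = of_nat (fact l * fact (n - l) * (n choose l))"
    by (simp only: binomial_fact_lemma atLeastAtMost_iff of_nat_fact)
  then show "fact n * (f $ l * g $ (n - l)) =
      of_nat (n choose l) * (fact l * f $ l) * (fact (n - l) * g $ (n - l))"
    by (simp only: of_nat_mult of_nat_fact mult_ac)
qed

lemma S1_0_left: "S1 0 m = (if m = 0 then 1 else 0)"
  by (simp add: S1_def)

lemma S1_Suc_0: "S1 (Suc j) 0 = - int j * S1 j 0"
  by (simp add: S1_def mult.commute[of _ "[:_, 1:]"] mult_pCons_left)

lemma S1_Suc_Suc: "S1 (Suc j) (Suc m) = S1 j m - int j * S1 j (Suc m)"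
  by (simp add: S1_def mult.commute[of _ "[:_, 1:]"] mult_pCons_left)

lemma one_plus_fps_X_mult_deriv_nth:
  "((1 + fps_X) * fps_deriv f) $ j = of_nat (Suc j) * f $ Suc j + of_nat j * f $ j"
  for f :: "'a::comm_ring_1 fps"
  by (cases j) (simp_all add: algebra_simps)

lemma one_plus_fps_X_mult_deriv_fps_ln_power:
  "(1 + fps_X) * fps_deriv (fps_ln 1 ^ Suc m) =
     fps_const (of_nat (Suc m)) * fps_ln (1::'a::field_char_0) ^ m"
proof -
  have "fps_deriv (fps_ln 1 ^ Suc m) =
      inverse (1 + fps_X) * (fps_const (of_nat (Suc m)) * fps_ln (1::'a) ^ m)"
    unfolding fps_deriv_power fps_ln_deriv by simp
  moreover have "(1 + fps_X) * inverse (1 + fps_X :: 'a fps) = 1"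
    by (simp add: inverse_mult_eq_1')
  ultimately show ?thesis
    by (simp only: mult.assoc[symmetric] mult_1_left)
qed

text \<open>
  Comparing coefficients of t^j in (1+t) D(u^(m+1)) = (m+1) u^m, where u = log(1+t),
  yields exactly the recurrence \<open>S1_Suc_Suc\<close> of the Stirling numbers.
\<close>
lemma fact_mult_fps_ln_power_nth:
  "fact j * (fps_ln 1 ^ m) $ j = (fact m * of_int (S1 j m) :: 'a::field_char_0)"
proof (induction j arbitrary: m)
  case 0
  then show ?case by (cases m) (simp_all add: S1_0_left)
next
  case (Suc j)
  show ?case
  proof (cases m)
    case 0
    then show ?thesis
      using Suc.IH[of 0] by (cases j) (simp_all add: S1_Suc_0)
  next
    case (Suc m')
    define L where "L = fps_ln (1::'a)"
    define P where "P = L ^ Suc m'"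
    have "of_nat (Suc m') * (L ^ m') $ j = of_nat (Suc j) * P $ Suc j + of_nat j * P $ j"
      using one_plus_fps_X_mult_deriv_nth[of P j]
      unfolding P_def L_def one_plus_fps_X_mult_deriv_fps_ln_power fps_mult_left_const_nth .
    then have "fact (Suc j) * P $ Suc j
        = of_nat (Suc m') * (fact j * (L ^ m') $ j) - of_nat j * (fact j * P $ j)"
      by (simp add: algebra_simps)
    also have "\<dots> = fact (Suc m') * of_int (S1 (Suc j) (Suc m'))"
      unfolding P_def L_def Suc.IH by (simp add: S1_Suc_Suc algebra_simps)
    finally show ?thesis
      using Suc by (simp add: P_def L_def)
  qed
qed

lemma fact_mult_fps_compose_ln_nth:
  "fact j * (f oo fps_ln 1) $ j = (\<Sum>m = 0..j. of_int (S1 j m) * (fact m * f $ m))"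
  for f :: "'a::field_char_0 fps"
  unfolding fps_compose_nth sum_distrib_left
proof (rule sum.cong[OF refl])
  fix m
  have "fact j * (f $ m * (fps_ln 1 ^ m) $ j) = f $ m * (fact j * (fps_ln 1 ^ m) $ j)"
    by (rule mult.left_commute)
  also have "\<dots> = of_int (S1 j m) * (fact m * f $ m)"
    by (simp only: fact_mult_fps_ln_power_nth mult_ac)
  finally show "fact j * (f $ m * (fps_ln 1 ^ m) $ j) = of_int (S1 j m) * (fact m * f $ m)" .
qed

lemma FE_gf_compose_fps_ln:
  assumes "lam \<noteq> 1"
  shows "(1 + fps_const (1 / (1 - lam)) * fps_X) ^ s * (FE_gf s lam x oo fps_ln 1) = fps_binomial x"
proof -
  let ?L = "fps_ln (1::complex)"
  let ?Q = "fps_const (1 - lam) * inverse (fps_exp 1 - fps_const lam)"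
  let ?c = "1 / (1 - lam)"
  have L0: "?L $ 0 = 0" by simp
  have "?Q * (fps_exp 1 - fps_const lam) = fps_const (1 - lam)"
    using assms by (simp add: mult.assoc inverse_mult_eq_1)
  then have "(?Q oo ?L) * ((fps_exp 1 oo ?L) - fps_const lam) = fps_const (1 - lam)"
    by (metis L0 fps_compose_mult_distrib fps_compose_sub_distrib fps_const_compose)
  then have Q: "(?Q oo ?L) * (1 + fps_X - fps_const lam) = fps_const (1 - lam)"
    by (simp add: fps_binomial_eq_exp_compose_ln[symmetric] fps_binomial_1)
  have "1 + fps_const ?c * fps_X = fps_const ?c * (1 + fps_X - fps_const lam)"
    using assms by (simp add: algebra_simps fps_const_mult[symmetric] fps_const_add[symmetric]
        fps_const_sub[symmetric] field_simps del: fps_const_mult fps_const_add)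
  then have "(1 + fps_const ?c * fps_X) * (?Q oo ?L) =
      fps_const ?c * ((?Q oo ?L) * (1 + fps_X - fps_const lam))"
    by (simp only: mult_ac)
  also have "\<dots> = 1"
    using assms by (simp only: Q fps_const_mult) simp
  finally have inv: "(1 + fps_const ?c * fps_X) * (?Q oo ?L) = 1" .
  have "FE_gf s lam x oo ?L = (?Q oo ?L) ^ s * (fps_exp x oo ?L)"
    unfolding FE_gf_def
    by (simp only: fps_compose_mult_distrib[OF L0, of "?Q ^ s"] fps_compose_power[OF L0])
  then show ?thesis
    by (simp add: fps_binomial_eq_exp_compose_ln mult.assoc[symmetric]
        power_mult_distrib[symmetric] inv)
qed

lemma Atilde_binomial_convolution:
  assumes "lam \<noteq> 1"
  shows "Atilde n r k x =
    (\<Sum>l = 0..n. of_nat (n choose l) *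
       (\<Sum>a = 0..l. of_nat ((s choose a) * (l choose a) * fact a) / (1 - lam) ^ a * Atilde (l - a) r k 0) *
       (\<Sum>m = 0..n - l. of_int (S1 (n - l) m) * FrobEuler m s lam x))"
proof -
  let ?B = "(1 + fps_const (1 / (1 - lam)) * fps_X) ^ s"
  let ?F = "FE_gf s lam x oo fps_ln 1"
  have gf: "Atilde_gf r k x = (?B * Atilde_gf r k 0) * ?F"
    using FE_gf_compose_fps_ln[OF assms, of s x] by (simp add: Atilde_gf_def mult_ac)
  have B: "fact l * (?B * Atilde_gf r k 0) $ l =
      (\<Sum>a = 0..l. of_nat ((s choose a) * (l choose a) * fact a) / (1 - lam) ^ a * Atilde (l - a) r k 0)"
    for l
    unfolding fact_mult_fps_mult_nth fps_one_plus_const_X_power_nth Atilde_def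
    by (simp add: power_one_over mult_ac)
  have F: "fact j * ?F $ j = (\<Sum>m = 0..j. of_int (S1 j m) * FrobEuler m s lam x)" for j
    by (simp add: fact_mult_fps_compose_ln_nth FrobEuler_def)
  show ?thesis
    unfolding Atilde_def[of n r k x] of_nat_fact gf fact_mult_fps_mult_nth[of n] B F ..
qed

lemma sum_triangle_swap:
  "(\<Sum>l = 0..n. \<Sum>m = 0..n - l. g l m) = (\<Sum>m = 0..n. \<Sum>l = 0..n - m. g l m)"
  for n :: nat
proof -
  have "(\<Sum>l = 0..n. \<Sum>m = 0..n - l. g l m) =
      (\<Sum>l = 0..n. \<Sum>m \<in> {m \<in> {0..n}. l + m \<le> n}. g l m)"
    by (intro sum.cong) auto
  also have "\<dots> = (\<Sum>m = 0..n. \<Sum>l \<in> {l \<in> {0..n}. l + m \<le> n}. g l m)"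
    by (rule sum.swap_restrict) simp_all
  also have "\<dots> = (\<Sum>m = 0..n. \<Sum>l = 0..n - m. g l m)"
    by (intro sum.cong) auto
  finally show ?thesis .
qed

lemma sum_triangle_product_reorder:
  "(\<Sum>l = 0..n. c l * (\<Sum>a = 0..l. f l a) * (\<Sum>m = 0..n - l. g l m)) =
     (\<Sum>m = 0..n. \<Sum>l = 0..n - m. \<Sum>a = 0..l. c l * f l a * g l m)"
  for c :: "nat \<Rightarrow> 'a::comm_semiring_0"
proof -
  have "c l * (\<Sum>a = 0..l. f l a) * (\<Sum>m = 0..n - l. g l m) =
      (\<Sum>m = 0..n - l. \<Sum>a = 0..l. c l * f l a * g l m)" for l
    unfolding sum_distrib_left[of "c l"] sum_product by (rule sum.swap)
  then have "(\<Sum>l = 0..n. c l * (\<Sum>a = 0..l. f l a) * (\<Sum>m = 0..n - l. g l m)) =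
      (\<Sum>l = 0..n. \<Sum>m = 0..n - l. \<Sum>a = 0..l. c l * f l a * g l m)"
    by (rule sum.cong[OF refl])
  also have "\<dots> = (\<Sum>m = 0..n. \<Sum>l = 0..n - m. \<Sum>a = 0..l. c l * f l a * g l m)"
    by (rule sum_triangle_swap)
  finally show ?thesis .
qed

theorem theorem8:
  fixes n r s :: nat and k :: int and lam x :: complex
  assumes "lam \<noteq> 1"
  shows "Atilde n r k x =
    (\<Sum>m = 0..n.
       (\<Sum>l = 0..n - m. \<Sum>a = 0..l.
          of_nat ((n choose l) * (s choose a) * (l choose a) * fact a) / (1 - lam) ^ a
          * of_int (S1 (n - l) m) * Atilde (l - a) r k 0)
       * FrobEuler m s lam x)"
proof -
  have summand: "of_nat (n choose l) *
        (of_nat ((s choose a) * (l choose a) * fact a) / (1 - lam) ^ a * Atilde (l - a) r k 0) *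
        (of_int (S1 (n - l) m) * FrobEuler m s lam x) =
      of_nat ((n choose l) * (s choose a) * (l choose a) * fact a) / (1 - lam) ^ a
        * of_int (S1 (n - l) m) * Atilde (l - a) r k 0 * FrobEuler m s lam x" for l a m
    by (simp add: divide_inverse mult_ac)
  show ?thesis
    unfolding Atilde_binomial_convolution[OF assms, of n r k x s] sum_triangle_product_reorder
    by (simp only: summand sum_distrib_right)
qed

end
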